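(* Let $\bm y\sim N_n(\bm X\bm\beta,\sigma^2\bm I_n)$ with $\bm X=[\bm x_1,\dots,\bm x_p]\in\mathbb{R}^{n\times p}$ deterministic of full column rank, and let $\mathcal H_0=\{j:\beta_j=0\}$. Let $\bm W=(W_1,\dots,W_p)=\bm W(\bm y)$ be a fixed measurable function of $\bm y$ (the one-at-a-time knockoff statistics, with knockoff randomness held fixed). Fix $\beta\in(0,1)$, $c\ge0$, and for a statistic vector $\bm W$ let $T_\beta=\min\{t:\frac{c+\#\{\ell:W_\ell\le -t\}}{1\vee\#\{\ell:W_\ell\ge t\}}\le\beta\}$. For each $j$, let $\bm G_j=(\bm X_{\backslash j}^\top\bm y,\|\bm y\|^2)$, where $\bm X_{\backslash j}$ is $\bm X$ without column $j$, and for $t\ge0$ define $$\phi_j(t;\bm G_j)=\mathbb{E}\Big[\frac{\mathbf{1}\{tW_j'\ge T_\beta'\}}{c+\sum_{\ell\in[p]}\mathbf{1}\{W_\ell'\le -T_\beta'\}}-\frac{\mathbf{1}\{W_j'\le -T_\beta'\}}{\sum_{\ell\in[p]}\mathbf{1}\{W_\ell'\le -T_\beta'\}}\,\Big|\,\bm G_j\Big],$$ where $\bm W'=\bm W(\bm y')$, $T_\beta'$ is the threshold computed from $\bm W'$, and $\bm y'$ is drawn from the conditional distribution of $\bm y$ given $\bm G_j$ under the hypothesis $\beta_j=0$ (which does not depend on the remaining unknown parameters). Let $\hat t_j=\sup\{t\ge0:\phi_j(t;\bm G_j)\le0\}$, and set $e_j=\frac{p\,\mathbf{1}\{\hat t_jW_j\ge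 T_\beta\}}{c+\sum_{\ell}\mathbf{1}\{W_\ell\le -T_\beta\}}$ if $\phi_j(\hat t_j;\bm G_j)\le0$ and $e_j=\frac{p\,\mathbf{1}\{\hat t_jW_j> T_\beta\}}{c+\sum_{\ell}\mathbf{1}\{W_\ell\le -T_\beta\}}$ otherwise, where $\bm W,T_\beta$ are computed from the observed $\bm y$. Then $\sum_{j\in\mathcal H_0}\mathbb{E}[e_j]\le p$, and the eBH procedure applied to $e_1,\dots,e_p$ at level $\alpha\in(0,1)$ has false discovery rate at most $\alpha$.
   Context: Convention: $0/0=0$. The eBH procedure at level $\alpha$: sort $e_{\pi(1)}\ge\dots\ge e_{\pi(p)}$, let $\hat k=\max\{k\in[p]:k e_{\pi(k)}/p\ge1/\alpha\}$ (zero if the set is empty), and reject $\{\pi(k):k\le\hat k\}$. For a rejection set $\widehat S$, $\mathrm{FDP}=|\widehat S\cap\mathcal H_0|/(|\widehat S|\vee1)$ and the false discovery rate is $\mathbb{E}[\mathrm{FDP}]$. *)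

theory Defs
  imports "HOL-Analysis.Analysis" "HOL-Probability.Probability"
begin

definition iso_gauss :: "real^'n \<Rightarrow> real \<Rightarrow> (real^'n) measure" where
  "iso_gauss mu s = density lborel
     (\<lambda>y. ennreal ((2 * pi * s^2) powr (- real CARD('n) / 2) * exp (- ((dist y mu) ^ 2) / (2 * s ^ 2))))"

text \<open>G_j(y) = (X_{-j}^T y, ||y||^2); the j-th coordinate of the first component is set to 0
  (the entries l \<noteq> j are the inner products x_l . y).\<close>
definition Gstat :: "real^'p^'n \<Rightarrow> 'p \<Rightarrow> real^'n \<Rightarrow> (real^'p) \<times> real" where
  "Gstat X j y = ((\<chi> l. if l = j then 0 else (transpose X *v y) $ l), (norm y)^2)"

text \<open>Knockoff threshold T_q (q = the knockoff level beta); +infinity if no admissible t.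
  As in the knockoff filter, t ranges over the nonzero magnitudes |W_l|.\<close>
definition knock_T :: "real \<Rightarrow> real \<Rightarrow> real^'p \<Rightarrow> ereal" where
  "knock_T q c w = Inf (ereal ` {t. t \<in> (\<lambda>l. \<bar>w $ l\<bar>) ` UNIV \<and> t > 0 \<and>
      (c + real (card {l. w $ l \<le> - t}))
        / real (max 1 (card {l. w $ l \<ge> t})) \<le> q})"

definition neg_count :: "real \<Rightarrow> real \<Rightarrow> real^'p \<Rightarrow> nat" where
  "neg_count q c w = card {l. ereal (w $ l) \<le> - knock_T q c w}"

definition ko_term :: "real \<Rightarrow> real \<Rightarrow> ereal \<Rightarrow> 'p \<Rightarrow> real^'p \<Rightarrow> real" where
  "ko_term q c t j w =
     (if t * ereal (w $ j) \<ge> knock_T q c w then 1 else 0) / (c + real (neg_count q c w))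
   - (if ereal (w $ j) \<le> - knock_T q c w then 1 else 0) / real (neg_count q c w)"

text \<open>phi_j(t; g), with K j g the conditional law of y' given G_j = g under beta_j = 0.\<close>
definition phi :: "('p \<Rightarrow> (real^'p) \<times> real \<Rightarrow> (real^'n) measure) \<Rightarrow> (real^'n \<Rightarrow> real^'p)
    \<Rightarrow> real \<Rightarrow> real \<Rightarrow> 'p \<Rightarrow> ereal \<Rightarrow> (real^'p) \<times> real \<Rightarrow> real" where
  "phi K W q c j t g = (\<integral>y'. ko_term q c t j (W y') \<partial>(K j g))"

definition t_hat :: "('p \<Rightarrow> (real^'p) \<times> real \<Rightarrow> (real^'n) measure) \<Rightarrow> (real^'n \<Rightarrow> real^'p)
    \<Rightarrow> real \<Rightarrow> real \<Rightarrow> 'p \<Rightarrow> (real^'p) \<times> real \<Rightarrow> ereal" where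
  "t_hat K W q c j g = Sup (ereal ` {t. t \<ge> 0 \<and> phi K W q c j (ereal t) g \<le> 0})"

definition evalue :: "real^'p^'n \<Rightarrow> ('p \<Rightarrow> (real^'p) \<times> real \<Rightarrow> (real^'n) measure) \<Rightarrow> (real^'n \<Rightarrow> real^'p)
    \<Rightarrow> real \<Rightarrow> real \<Rightarrow> 'p \<Rightarrow> real^'n \<Rightarrow> real" where
  "evalue X K W q c j y =
     (let g = Gstat X j y; th = t_hat K W q c j g; w = W y; T = knock_T q c w;
          D = c + real (neg_count q c w)
      in if phi K W q c j th g \<le> 0
         then real CARD('p) * (if th * ereal (w $ j) \<ge> T then 1 else 0) / D
         else real CARD('p) * (if th * ereal (w $ j) > T then 1 else 0) / D)"

definition sort_desc :: "('p::finite \<Rightarrow> real) \<Rightarrow> nat \<Rightarrow> 'p" where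
  "sort_desc e = (SOME pi. bij_betw pi {1..CARD('p)} UNIV \<and>
      (\<forall>i\<in>{1..CARD('p)}. \<forall>k\<in>{1..CARD('p)}. i \<le> k \<longrightarrow> e (pi k) \<le> e (pi i)))"

definition ebh_khat :: "real \<Rightarrow> ('p::finite \<Rightarrow> real) \<Rightarrow> nat" where
  "ebh_khat a e = Max ({0} \<union> {k \<in> {1..CARD('p)}.
      real k * e (sort_desc e k) / real CARD('p) \<ge> 1 / a})"

definition ebh :: "real \<Rightarrow> ('p::finite \<Rightarrow> real) \<Rightarrow> 'p set" where
  "ebh a e = sort_desc e ` {1..ebh_khat a e}"

definition fdp :: "'p set \<Rightarrow> 'p set \<Rightarrow> real" where
  "fdp H0 S = real (card (S \<inter> H0)) / real (max 1 (card S))"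

end

theory Submission
  imports Defs
begin

text \<open>
  Split the integrand of \<open>\<phi>\<^sub>j\<close> as \<open>R\<^sub>j(t) - N\<^sub>j\<close>, where
  \<open>R\<^sub>j(t) = 1{t W\<^sub>j \<ge> T}/(c + #{l. W\<^sub>l \<le> -T})\<close> is nondecreasing in \<open>t\<close> and vanishes at
  \<open>t = 0\<close>, and \<open>N\<^sub>j = 1{W\<^sub>j \<le> -T}/#{l. W\<^sub>l \<le> -T}\<close> is the share of \<open>j\<close> among the negative
  statistics.  Hence \<open>\<phi>\<^sub>j\<close> is monotone with \<open>\<phi>\<^sub>j(0) \<le> 0\<close>, and at the calibrated threshold
  \<open>t\<^sub>j\<close> (\<open>t_hat\<close>) we get \<open>E[e\<^sub>j | G\<^sub>j] \<le> p E[N\<^sub>j | G\<^sub>j]\<close> under the null: directly if \<open>\<phi>\<^sub>j(t\<^sub>j) \<le> 0\<close>,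
  and otherwise by monotone convergence along \<open>t \<up> t\<^sub>j\<close>, which is why the strict
  inequality is used in that case.  Since the shares \<open>N\<^sub>j\<close> sum to at most 1,
  \<open>\<Sum>\<^sub>j\<^sub>\<in>\<^sub>H\<^sub>0 E e\<^sub>j \<le> p\<close>; the FDR bound is the usual eBH estimate
  \<open>FDP \<le> (\<alpha>/p) \<Sum>\<^sub>j\<^sub>\<in>\<^sub>H\<^sub>0 e\<^sub>j\<close>.
\<close>

section \<open>Measurability of the knockoff statistics\<close>

lemma borel_measurable_vec_nth[measurable]: "(\<lambda>x::real^'n. x $ i) \<in> borel_measurable borel"
  by (intro borel_measurable_continuous_onI continuous_intros)

lemma borel_measurable_fst[measurable]:
  "fst \<in> (borel :: ('a::second_countable_topology \<times> 'b::second_countable_topology) measure) \<rightarrow>\<^sub>M borel"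
  by (subst borel_prod[symmetric]) (rule measurable_fst)

lemma borel_measurable_snd[measurable]:
  "snd \<in> (borel :: ('a::second_countable_topology \<times> 'b::second_countable_topology) measure) \<rightarrow>\<^sub>M borel"
  by (subst borel_prod[symmetric]) (rule measurable_snd)

lemma real_card_Collect_eq_sum: "real (card {l::'p::finite. P l}) = (\<Sum>l\<in>UNIV. if P l then 1 else 0)"
  by (simp add: sum.If_cases)

lemma knock_T_eq_INF:
  "knock_T q c w = (INF l. if 0 < \<bar>w $ l\<bar> \<and> (c + real (card {m. w $ m \<le> - \<bar>w $ l\<bar>}))
        / real (max 1 (card {m. w $ m \<ge> \<bar>w $ l\<bar>})) \<le> q then ereal \<bar>w $ l\<bar> else \<infinity>)"
  (is "_ = ?R")
proof (rule antisym)
  show "knock_T q c w \<le> ?R"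
    unfolding knock_T_def by (rule INF_greatest) (auto intro!: Inf_lower)
  show "?R \<le> knock_T q c w"
    unfolding knock_T_def
  proof (rule Inf_greatest)
    fix x assume "x \<in> ereal ` {t. t \<in> range (\<lambda>l. \<bar>w $ l\<bar>) \<and> t > 0 \<and>
      (c + real (card {l. w $ l \<le> - t})) / real (max 1 (card {l. w $ l \<ge> t})) \<le> q}"
    then obtain l where "x = ereal \<bar>w $ l\<bar>" "0 < \<bar>w $ l\<bar>" "(c + real (card {m. w $ m \<le> - \<bar>w $ l\<bar>}))
        / real (max 1 (card {m. w $ m \<ge> \<bar>w $ l\<bar>})) \<le> q" by auto
    then show "?R \<le> x" by (intro INF_lower2[of l]) auto
  qed
qed

lemma knock_T_pos: "0 < knock_T q c (w::real^'p)"
proof -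
  let ?f = "\<lambda>l. if 0 < \<bar>w $ l\<bar> \<and> (c + real (card {m. w $ m \<le> - \<bar>w $ l\<bar>}))
        / real (max 1 (card {m. w $ m \<ge> \<bar>w $ l\<bar>})) \<le> q then ereal \<bar>w $ l\<bar> else \<infinity>"
  have "knock_T q c w = Min (range ?f)"
    unfolding knock_T_eq_INF by (rule Min_Inf[symmetric]) auto
  also have "\<dots> \<in> range ?f" by (rule Min_in) auto
  finally show ?thesis by (auto split: if_splits)
qed

lemma borel_measurable_knock_T: "knock_T q c \<in> borel_measurable (borel :: (real^'p) measure)"
  unfolding knock_T_eq_INF real_card_Collect_eq_sum of_nat_max of_nat_1
  by (rule borel_measurable_INF) simp_all

lemma borel_measurable_knock_T'[measurable (raw)]:
  "f \<in> borel_measurable M \<Longrightarrow> (\<lambda>x. knock_T q c (f x :: real^'p)) \<in> borel_measurable M"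
  using measurable_compose[OF _ borel_measurable_knock_T] .

lemma borel_measurable_neg_count:
  "(\<lambda>w. real (neg_count q c w)) \<in> borel_measurable (borel :: (real^'p::finite) measure)"
  unfolding neg_count_def real_card_Collect_eq_sum by measurable

lemma borel_measurable_neg_count'[measurable (raw)]:
  "f \<in> borel_measurable M \<Longrightarrow> (\<lambda>x. real (neg_count q c (f x :: real^'p::finite))) \<in> borel_measurable M"
  using measurable_compose[OF _ borel_measurable_neg_count] .

section \<open>The calibration function\<close>

definition rej_term :: "real \<Rightarrow> real \<Rightarrow> ereal \<Rightarrow> 'p \<Rightarrow> real^'p \<Rightarrow> real" where
  "rej_term q c t j w = (if t * ereal (w $ j) \<ge> knock_T q c w then 1 else 0) / (c + real (neg_count q c w))"

definition neg_share :: "real \<Rightarrow> real \<Rightarrow> 'p \<Rightarrow> real^'p \<Rightarrow> real" where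
  "neg_share q c j w = (if ereal (w $ j) \<le> - knock_T q c w then 1 else 0) / real (neg_count q c w)"

lemma ko_term_eq_diff: "ko_term q c t j w = rej_term q c t j w - neg_share q c j w"
  unfolding ko_term_def rej_term_def neg_share_def ..

lemma borel_measurable_rej_term[measurable (raw)]:
  assumes [measurable]: "f \<in> M \<rightarrow>\<^sub>M borel" "g \<in> borel_measurable M"
  shows "(\<lambda>x. rej_term q c (f x) j (g x :: real^'p::finite)) \<in> borel_measurable M"
  unfolding rej_term_def by measurable

lemma borel_measurable_neg_share[measurable (raw)]:
  assumes [measurable]: "g \<in> borel_measurable M"
  shows "(\<lambda>x. neg_share q c j (g x :: real^'p::finite)) \<in> borel_measurable M"
  unfolding neg_share_def by measurable

lemma rej_term_nonneg: "c \<ge> 0 \<Longrightarrow> 0 \<le> rej_term q c t j w"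
  unfolding rej_term_def by simp

lemma rej_term_le: assumes "c \<ge> 0" shows "rej_term q c t j w \<le> 1 + 1 / c"
proof -
  have "1 / (c + real (neg_count q c w)) \<le> 1 + 1 / c"
  proof (cases "neg_count q c w = 0")
    case False
    then have "1 \<le> c + real (neg_count q c w)" using assms by linarith
    then have "1 / (c + real (neg_count q c w)) \<le> 1" by simp
    moreover have "0 \<le> 1 / c" using assms by simp
    ultimately show ?thesis by linarith
  qed (use assms in simp)
  then show ?thesis using assms unfolding rej_term_def by auto
qed

lemma rej_term_zero: "rej_term q c 0 j w = 0"
  using knock_T_pos[of q c w] unfolding rej_term_def by auto

lemma rej_term_mono:
  assumes "c \<ge> 0" "0 \<le> t" "t \<le> s" shows "rej_term q c t j w \<le> rej_term q c s j w"
proof (cases "t * ereal (w $ j) \<ge> knock_T q c w")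
  case True
  have "w $ j > 0"
  proof (rule ccontr)
    assume "\<not> w $ j > 0"
    then have "t * ereal (w $ j) \<le> 0" using assms(2) by (cases t) (auto simp: mult_nonneg_nonpos)
    then show False using True knock_T_pos[of q c w] by simp
  qed
  then have "t * ereal (w $ j) \<le> s * ereal (w $ j)"
    using assms by (intro ereal_mult_right_mono) auto
  with True have "knock_T q c w \<le> s * ereal (w $ j)" by (rule order.trans)
  with True show ?thesis unfolding rej_term_def by simp
next
  case False
  then show ?thesis using rej_term_nonneg[OF assms(1), of q s j w] unfolding rej_term_def by simp
qed

lemma neg_share_nonneg: "0 \<le> neg_share q c j w"
  unfolding neg_share_def by simp

lemma neg_share_le_1: "neg_share q c j w \<le> 1"
  unfolding neg_share_def by (cases "neg_count q c w") auto

lemma sum_neg_share_le_1: "(\<Sum>j\<in>H. neg_share q c j w) \<le> 1"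
proof -
  have "(\<Sum>j\<in>H. neg_share q c j w) \<le> (\<Sum>j\<in>UNIV. neg_share q c j w)"
    by (intro sum_mono2) (auto simp: neg_share_nonneg)
  also have "\<dots> = real (neg_count q c w) / real (neg_count q c w)"
    unfolding neg_share_def sum_divide_distrib[symmetric] neg_count_def real_card_Collect_eq_sum ..
  also have "\<dots> \<le> 1" by simp
  finally show ?thesis .
qed

definition evalue_gw :: "('p \<Rightarrow> (real^'p) \<times> real \<Rightarrow> (real^'n) measure) \<Rightarrow> (real^'n \<Rightarrow> real^'p)
    \<Rightarrow> real \<Rightarrow> real \<Rightarrow> 'p \<Rightarrow> (real^'p) \<times> real \<Rightarrow> real^'p \<Rightarrow> real" where
  "evalue_gw K W q c j g w =
     (let th = t_hat K W q c j g; T = knock_T q c w; D = c + real (neg_count q c w)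
      in if phi K W q c j th g \<le> 0
         then real CARD('p) * (if th * ereal (w $ j) \<ge> T then 1 else 0) / D
         else real CARD('p) * (if th * ereal (w $ j) > T then 1 else 0) / D)"

lemma evalue_eq_evalue_gw: "evalue X K W q c j y = evalue_gw K W q c j (Gstat X j y) (W y)"
  unfolding evalue_def evalue_gw_def Let_def ..

lemma evalue_gw_nonneg: "c \<ge> 0 \<Longrightarrow> 0 \<le> evalue_gw K W q c j g w"
  unfolding evalue_gw_def Let_def by auto

lemma ereal_less_mult_iff_approx:
  fixes T t :: ereal and x :: "nat \<Rightarrow> real"
  assumes T: "0 < T" and x_pos: "\<And>i. 0 < x i" and x_less: "\<And>i. ereal (x i) < t"
    and lim: "(\<lambda>i. ereal (x i)) \<longlonglongrightarrow> t"
  shows "T < t * ereal a \<longleftrightarrow> (\<exists>i. T \<le> ereal (x i) * ereal a)"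
proof
  assume lt: "T < t * ereal a"
  have t_pos: "0 < t" using x_pos[of 0] x_less[of 0] by (metis ereal_less(2) order.strict_trans)
  have "a > 0"
  proof (rule ccontr)
    assume "\<not> a > 0"
    then have "t * ereal a \<le> 0" using t_pos by (cases t) (auto simp: mult_nonneg_nonpos)
    then show False using lt T by simp
  qed
  obtain \<tau> where \<tau>: "T = ereal \<tau>" using T lt by (cases T) auto
  have "ereal (\<tau> / a) < t"
    using lt t_pos \<open>a > 0\<close> by (cases t) (auto simp: \<tau> divide_less_eq)
  then have "eventually (\<lambda>i. ereal (\<tau> / a) < ereal (x i)) sequentially"
    using order_tendstoD(1)[OF lim] by blast
  then obtain i where "ereal (\<tau> / a) < ereal (x i)" by (auto dest: eventually_happens)
  then show "\<exists>i. T \<le> ereal (x i) * ereal a"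
    using \<open>a > 0\<close> by (auto simp: \<tau> divide_less_eq intro!: exI[of _ i])
next
  assume "\<exists>i. T \<le> ereal (x i) * ereal a"
  then obtain i where i: "T \<le> ereal (x i) * ereal a" by blast
  have "a > 0"
  proof (rule ccontr)
    assume "\<not> a > 0"
    then have "x i * a \<le> 0" using x_pos[of i] by (simp add: mult_nonneg_nonpos)
    then show False using i T by (cases T) auto
  qed
  then have "ereal (x i) * ereal a < t * ereal a"
    using x_less[of i] by (intro ereal_mult_strict_right_mono) auto
  then show "T < t * ereal a" using i by simp
qed

lemma integral_measurable_subprob_algebra2:
  fixes f :: "'a \<Rightarrow> 'b \<Rightarrow> real"
  assumes f[measurable]: "(\<lambda>(x, y). f x y) \<in> borel_measurable (M \<Otimes>\<^sub>M N)"
    and L[measurable]: "L \<in> measurable M (subprob_algebra N)"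
  shows "(\<lambda>x. integral\<^sup>L (L x) (f x)) \<in> borel_measurable M"
proof -
  note integral_measurable_subprob_algebra[measurable] measurable_distr2[measurable]
  have "(\<lambda>x. integral\<^sup>L (distr (L x) (M \<Otimes>\<^sub>M N) (\<lambda>y. (x, y))) (\<lambda>(x, y). f x y)) \<in> borel_measurable M"
    by measurable
  then show ?thesis
  proof (rule measurable_cong[THEN iffD1, rotated])
    fix x assume x: "x \<in> space M"
    have "sets (L x) = sets N"
      using measurable_space[OF L x] by (simp add: space_subprob_algebra)
    then have "(\<lambda>y. (x, y)) \<in> measurable (L x) (M \<Otimes>\<^sub>M N)"
      using measurable_Pair1'[OF x, of N] measurable_cong_sets by blast
    from integral_distr[OF this f]
    show "integral\<^sup>L (distr (L x) (M \<Otimes>\<^sub>M N) (\<lambda>y. (x, y))) (\<lambda>(x, y). f x y) = integral\<^sup>L (L x) (f x)"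
      by simp
  qed
qed

context
  fixes K :: "'p::finite \<Rightarrow> (real^'p) \<times> real \<Rightarrow> (real^'n) measure" and W :: "real^'n \<Rightarrow> real^'p"
    and q c :: real
  assumes W_meas[measurable]: "W \<in> borel_measurable borel"
    and c_nonneg: "c \<ge> 0"
    and K_kernel: "\<And>j. K j \<in> borel \<rightarrow>\<^sub>M prob_algebra borel"
begin

lemma prob_space_K: "prob_space (K j g)" and sets_K: "sets (K j g) = sets borel"
  using measurable_space[OF K_kernel, of g j] by (simp_all add: space_prob_algebra)

lemma borel_measurable_K: "f \<in> borel_measurable borel \<Longrightarrow> f \<in> borel_measurable (K j g)"
  using measurable_cong_sets[OF sets_K refl] by blast

lemma integrable_rej_term: "integrable (K j g) (\<lambda>y. rej_term q c t j (W y))"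
proof -
  interpret prob_space "K j g" by (rule prob_space_K)
  show ?thesis
    by (rule integrable_const_bound[where B="1 + 1/c"])
       (auto simp: rej_term_le[OF c_nonneg] rej_term_nonneg[OF c_nonneg] intro!: borel_measurable_K)
qed

lemma integrable_neg_share: "integrable (K j g) (\<lambda>y. neg_share q c j (W y))"
proof -
  interpret prob_space "K j g" by (rule prob_space_K)
  show ?thesis
    by (rule integrable_const_bound[where B=1])
       (auto simp: neg_share_le_1 neg_share_nonneg intro!: borel_measurable_K)
qed

lemma phi_eq_diff:
  "phi K W q c j t g = (\<integral>y. rej_term q c t j (W y) \<partial>K j g) - (\<integral>y. neg_share q c j (W y) \<partial>K j g)"
  unfolding phi_def ko_term_eq_diff by (rule Bochner_Integration.integral_diff[OF integrable_rej_term integrable_neg_share])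

lemma phi_mono: "0 \<le> t \<Longrightarrow> t \<le> s \<Longrightarrow> phi K W q c j t g \<le> phi K W q c j s g"
  unfolding phi_eq_diff
  using integral_mono[OF integrable_rej_term integrable_rej_term rej_term_mono[OF c_nonneg]] by simp

lemma phi_zero_nonpos: "phi K W q c j 0 g \<le> 0"
  unfolding phi_eq_diff rej_term_zero by (simp add: neg_share_nonneg)

lemma borel_measurable_phi[measurable (raw)]:
  assumes "f \<in> M \<rightarrow>\<^sub>M borel" "h \<in> M \<rightarrow>\<^sub>M borel"
  shows "(\<lambda>x. phi K W q c j (f x) (h x)) \<in> borel_measurable M"
proof -
  have "(\<lambda>x. phi K W q c j (fst x) (snd x)) \<in> borel_measurable (borel \<Otimes>\<^sub>M borel)"
    unfolding phi_def
  proof (rule integral_measurable_subprob_algebra2[where f="\<lambda>x y. ko_term q c (fst x) j (W y)" and N=borel])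
    show "(\<lambda>(x, y). ko_term q c (fst x) j (W y)) \<in> borel_measurable ((borel \<Otimes>\<^sub>M borel) \<Otimes>\<^sub>M borel)"
      unfolding ko_term_eq_diff by measurable
    show "(\<lambda>x. K j (snd x)) \<in> borel \<Otimes>\<^sub>M borel \<rightarrow>\<^sub>M subprob_algebra borel"
      using measurable_compose[OF measurable_snd measurable_prob_algebraD[OF K_kernel]] .
  qed
  from measurable_compose[OF measurable_Pair[OF assms] this] show ?thesis by simp
qed

lemma t_hat_nonneg: "0 \<le> t_hat K W q c j g"
  unfolding t_hat_def using phi_zero_nonpos[of j g]
  by (intro Sup_upper2[of 0]) (auto simp: zero_ereal_def)

lemma phi_nonpos_below_t_hat:
  assumes "ereal t < t_hat K W q c j g" "0 \<le> t" shows "phi K W q c j (ereal t) g \<le> 0"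
proof -
  from assms(1) obtain s where s: "0 \<le> s" "phi K W q c j (ereal s) g \<le> 0" "t < s"
    unfolding t_hat_def less_Sup_iff by auto
  have "phi K W q c j (ereal t) g \<le> phi K W q c j (ereal s) g"
    using s assms by (intro phi_mono) auto
  then show ?thesis using s by simp
qed

lemma t_hat_eq_SUP_Rats:
  "t_hat K W q c j g = (SUP t\<in>{t\<in>\<rat>. 0 \<le> t}. if phi K W q c j (ereal t) g \<le> 0 then ereal t else 0)"
  (is "_ = ?R")
proof (rule antisym)
  have R_nonneg: "0 \<le> ?R"
    using phi_zero_nonpos[of j g] zero_ereal_def by (intro SUP_upper2[of 0]) auto
  show "t_hat K W q c j g \<le> ?R" unfolding t_hat_def
  proof (rule Sup_least, rule ccontr)
    fix x assume "x \<in> ereal ` {t. t \<ge> 0 \<and> phi K W q c j (ereal t) g \<le> 0}" "\<not> x \<le> ?R"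
    then obtain s where s: "x = ereal s" "phi K W q c j (ereal s) g \<le> 0" and "?R < ereal s"
      by auto
    then obtain r where r: "?R = ereal r" "0 \<le> r" "r < s"
      using R_nonneg by (cases ?R) auto
    then obtain t where t: "t \<in> \<rat>" "r < t" "t < s" using Rats_dense_in_real by blast
    have "phi K W q c j (ereal t) g \<le> 0"
      using phi_mono[of "ereal t" "ereal s" j g] s t r by auto
    then have "ereal t \<le> ?R" using t r by (intro SUP_upper2[of t]) auto
    then show False using r t by simp
  qed
  show "?R \<le> t_hat K W q c j g"
    using t_hat_nonneg[of j g] unfolding t_hat_def by (intro SUP_least) (auto intro!: Sup_upper)
qed

lemma borel_measurable_t_hat[measurable (raw)]:
  "f \<in> M \<rightarrow>\<^sub>M borel \<Longrightarrow> (\<lambda>x. t_hat K W q c j (f x)) \<in> borel_measurable M"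
proof (erule measurable_compose)
  show "t_hat K W q c j \<in> borel_measurable borel"
    unfolding t_hat_eq_SUP_Rats
    by (rule borel_measurable_SUP) (auto intro: countable_subset[OF _ countable_rat])
qed

lemma borel_measurable_evalue_gw[measurable (raw)]:
  assumes [measurable]: "f \<in> M \<rightarrow>\<^sub>M borel" "h \<in> borel_measurable M"
  shows "(\<lambda>x. evalue_gw K W q c j (f x) (h x)) \<in> borel_measurable M"
  unfolding evalue_gw_def Let_def by measurable

lemma nn_integral_rej_term_le:
  assumes "phi K W q c j t g \<le> 0"
  shows "(\<integral>\<^sup>+ y. ennreal (real CARD('p) * rej_term q c t j (W y)) \<partial>K j g)
       \<le> (\<integral>\<^sup>+ y. ennreal (real CARD('p) * neg_share q c j (W y)) \<partial>K j g)"
proof -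
  have "(\<integral>\<^sup>+ y. ennreal (real CARD('p) * rej_term q c t j (W y)) \<partial>K j g)
      = ennreal (real CARD('p) * (\<integral>y. rej_term q c t j (W y) \<partial>K j g))"
    using integrable_rej_term
    by (subst nn_integral_eq_integral) (auto simp: rej_term_nonneg[OF c_nonneg])
  also have "\<dots> \<le> ennreal (real CARD('p) * (\<integral>y. neg_share q c j (W y) \<partial>K j g))"
    using assms unfolding phi_eq_diff by (intro ennreal_leI mult_left_mono) auto
  also have "\<dots> = (\<integral>\<^sup>+ y. ennreal (real CARD('p) * neg_share q c j (W y)) \<partial>K j g)"
    using integrable_neg_share
    by (subst nn_integral_eq_integral) (auto simp: neg_share_nonneg)
  finally show ?thesis .
qed

lemma evalue_gw_eq_SUP:
  assumes phi_pos: "\<not> phi K W q c j (t_hat K W q c j g) g \<le> 0"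
    and x: "\<And>i. 0 < x i" "\<And>i. ereal (x i) < t_hat K W q c j g"
      "(\<lambda>i. ereal (x i)) \<longlonglongrightarrow> t_hat K W q c j g"
  shows "ennreal (evalue_gw K W q c j g w) = (SUP i. ennreal (real CARD('p) * rej_term q c (ereal (x i)) j w))"
proof -
  let ?T = "knock_T q c w" and ?v = "real CARD('p) / (c + real (neg_count q c w))"
  have v_nonneg: "0 \<le> ?v" using c_nonneg by simp
  have rej: "real CARD('p) * rej_term q c (ereal (x i)) j w = (if ?T \<le> ereal (x i) * ereal (w$j) then ?v else 0)" for i
    unfolding rej_term_def by simp
  note approx = ereal_less_mult_iff_approx[OF knock_T_pos[of q c w] x, where a="w $ j"]
  show ?thesis
  proof (cases "?T < t_hat K W q c j g * ereal (w$j)")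
    case True
    then obtain i0 where "?T \<le> ereal (x i0) * ereal (w$j)"
      using approx by blast
    then have "(SUP i. ennreal (if ?T \<le> ereal (x i) * ereal (w$j) then ?v else 0)) = ennreal ?v"
      by (intro antisym SUP_least SUP_upper2[of i0]) (auto simp: v_nonneg)
    then show ?thesis using True phi_pos unfolding evalue_gw_def Let_def rej by simp
  next
    case False
    then have "\<not> ?T \<le> ereal (x i) * ereal (w$j)" for i
      using approx by blast
    then show ?thesis using False phi_pos unfolding evalue_gw_def Let_def rej by simp
  qed
qed

lemma nn_integral_evalue_gw_le:
  "(\<integral>\<^sup>+ y. ennreal (evalue_gw K W q c j g (W y)) \<partial>K j g)
    \<le> (\<integral>\<^sup>+ y. ennreal (real CARD('p) * neg_share q c j (W y)) \<partial>K j g)"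
proof (cases "phi K W q c j (t_hat K W q c j g) g \<le> 0")
  case True
  then have "evalue_gw K W q c j g w = real CARD('p) * rej_term q c (t_hat K W q c j g) j w" for w
    unfolding evalue_gw_def rej_term_def Let_def by simp
  then show ?thesis using nn_integral_rej_term_le[OF True] by simp
next
  case False
  let ?th = "t_hat K W q c j g"
  have "0 < ?th" using False phi_zero_nonpos[of j g] t_hat_nonneg[of j g] by (cases "?th = 0") auto
  then obtain x :: "nat \<Rightarrow> real" where x: "incseq x" "\<And>i. 0 < x i" "\<And>i. ereal (x i) < ?th"
    "(\<lambda>i. ereal (x i)) \<longlonglongrightarrow> ?th"
    using ereal_incseq_approx by (metis zero_ereal_def ereal_less(2))
  have inc: "incseq (\<lambda>i y. ennreal (real CARD('p) * rej_term q c (ereal (x i)) j (W y)))"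
    using x(1,2) by (intro monoI le_funI ennreal_leI mult_left_mono rej_term_mono[OF c_nonneg])
                    (auto simp: incseq_def less_imp_le)
  have "(\<integral>\<^sup>+ y. ennreal (evalue_gw K W q c j g (W y)) \<partial>K j g)
      = (\<integral>\<^sup>+ y. (SUP i. ennreal (real CARD('p) * rej_term q c (ereal (x i)) j (W y))) \<partial>K j g)"
    by (simp add: evalue_gw_eq_SUP[OF False x(2-4)])
  also have "\<dots> = (SUP i. \<integral>\<^sup>+ y. ennreal (real CARD('p) * rej_term q c (ereal (x i)) j (W y)) \<partial>K j g)"
    by (rule nn_integral_monotone_convergence_SUP[OF inc]) (intro borel_measurable_K, measurable)
  also have "\<dots> \<le> (\<integral>\<^sup>+ y. ennreal (real CARD('p) * neg_share q c j (W y)) \<partial>K j g)"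
    using x(2,3) by (intro SUP_least nn_integral_rej_term_le phi_nonpos_below_t_hat) (auto simp: less_imp_le)
  finally show ?thesis .
qed

end

section \<open>Disintegration and the e-value bound\<close>

lemma nn_integral_disintegration:
  fixes M :: "'a::second_countable_topology measure" and G :: "'a \<Rightarrow> 'b::second_countable_topology"
    and F :: "'b \<times> 'a \<Rightarrow> ennreal"
  assumes sets_M: "sets M = sets borel"
    and G: "G \<in> borel_measurable borel"
    and K: "K \<in> borel \<rightarrow>\<^sub>M subprob_algebra borel"
    and disint: "distr M borel (\<lambda>y. (G y, y)) = distr M borel G \<bind> (\<lambda>g. distr (K g) borel (\<lambda>y. (g, y)))"
    and F: "F \<in> borel_measurable borel"
  shows "(\<integral>\<^sup>+ y. F (G y, y) \<partial>M) = (\<integral>\<^sup>+ g. \<integral>\<^sup>+ y. F (g, y) \<partial>K g \<partial>distr M borel G)"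
proof -
  have sets_K: "sets (K g) = sets borel" for g
    using measurable_space[OF K, of g] by (simp add: space_subprob_algebra)
  have "(\<lambda>y. (G y, y)) \<in> M \<rightarrow>\<^sub>M borel"
    unfolding borel_prod[symmetric] measurable_cong_sets[OF sets_M refl]
    using G by measurable
  then have "(\<integral>\<^sup>+ y. F (G y, y) \<partial>M) = (\<integral>\<^sup>+ z. F z \<partial>distr M borel (\<lambda>y. (G y, y)))"
    using F by (simp add: nn_integral_distr)
  also have "\<dots> = (\<integral>\<^sup>+ g. \<integral>\<^sup>+ z. F z \<partial>distr (K g) borel (\<lambda>y. (g, y)) \<partial>distr M borel G)"
    unfolding disint
  proof (rule nn_integral_bind[OF F])
    have "(\<lambda>g. distr (K g) borel (\<lambda>y. (g, y))) \<in> borel \<rightarrow>\<^sub>M subprob_algebra borel"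
      by (rule measurable_distr2[where M=borel]) (simp_all add: borel_prod K)
    then show "(\<lambda>g. distr (K g) borel (\<lambda>y. (g, y))) \<in> distr M borel G \<rightarrow>\<^sub>M subprob_algebra borel"
      by simp
  qed
  also have "\<dots> = (\<integral>\<^sup>+ g. \<integral>\<^sup>+ y. F (g, y) \<partial>K g \<partial>distr M borel G)"
  proof (intro nn_integral_cong nn_integral_distr F)
    fix g
    have "(\<lambda>y. (g, y)) \<in> borel \<rightarrow>\<^sub>M (borel :: ('b \<times> 'a) measure)"
      by measurable
    then show "(\<lambda>y. (g, y)) \<in> K g \<rightarrow>\<^sub>M borel"
      using measurable_cong_sets[OF sets_K refl] by blast
    show "F \<in> borel_measurable (distr (K g) borel (\<lambda>y. (g, y)))"
      using F measurable_cong_sets[OF sets_distr refl] by blast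
  qed
  finally show ?thesis .
qed

lemma borel_measurable_Gstat[measurable]: "Gstat X j \<in> borel_measurable borel"
proof (rule borel_measurable_continuous_onI)
  show "continuous_on UNIV (Gstat X j)"
    unfolding Gstat_def
  proof (intro continuous_intros continuous_on_vec_lambda)
    show "continuous_on UNIV (\<lambda>y. if l = j then 0 else (transpose X *v y) $ l)" for l
      using continuous_on_component[OF matrix_vector_mult_linear_continuous_on[of UNIV "transpose X"], of l]
      by (cases "l = j") simp_all
  qed
qed

lemma borel_measurable_evalue[measurable]:
  fixes K :: "'p::finite \<Rightarrow> (real^'p) \<times> real \<Rightarrow> (real^'n) measure"
  assumes "W \<in> borel_measurable borel" "c \<ge> 0" "\<And>j. K j \<in> borel \<rightarrow>\<^sub>M prob_algebra borel"
  shows "evalue X K W q c j \<in> borel_measurable borel"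
  unfolding evalue_eq_evalue_gw[abs_def] using assms by measurable

lemma sum_nn_integral_evalue_le:
  fixes M :: "(real^'n) measure" and K :: "'p::finite \<Rightarrow> (real^'p) \<times> real \<Rightarrow> (real^'n) measure"
  assumes M: "prob_space M" "sets M = sets borel"
    and W_meas[measurable]: "W \<in> borel_measurable borel"
    and c: "c \<ge> 0"
    and K_kernel: "\<And>j. K j \<in> borel \<rightarrow>\<^sub>M prob_algebra borel"
    and K_cond: "\<And>j. j \<in> H \<Longrightarrow> distr M borel (\<lambda>y. (Gstat X j y, y))
      = distr M borel (Gstat X j) \<bind> (\<lambda>g. distr (K j g) borel (\<lambda>y. (g, y)))"
  shows "(\<Sum>j\<in>H. \<integral>\<^sup>+ y. ennreal (evalue X K W q c j y) \<partial>M) \<le> ennreal (real CARD('p))"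
proof -
  let ?p = "real CARD('p)"
  note borel_measurable_evalue_gw[OF W_meas c K_kernel, measurable]
  have meas_M: "M \<rightarrow>\<^sub>M N = borel \<rightarrow>\<^sub>M N" for N
    using measurable_cong_sets[OF M(2) refl] .
  have null_j: "(\<integral>\<^sup>+ y. ennreal (evalue X K W q c j y) \<partial>M)
      \<le> (\<integral>\<^sup>+ y. ennreal (?p * neg_share q c j (W y)) \<partial>M)" if "j \<in> H" for j
  proof -
    note disint = nn_integral_disintegration[OF M(2) borel_measurable_Gstat
        measurable_prob_algebraD[OF K_kernel] K_cond[OF that]]
    have "(\<integral>\<^sup>+ y. ennreal (evalue X K W q c j y) \<partial>M)
        = (\<integral>\<^sup>+ g. \<integral>\<^sup>+ y. ennreal (evalue_gw K W q c j g (W y)) \<partial>K j g \<partial>distr M borel (Gstat X j))"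
      unfolding evalue_eq_evalue_gw
      by (rule disint[where F="\<lambda>z. ennreal (evalue_gw K W q c j (fst z) (W (snd z)))", simplified])
         measurable
    also have "\<dots> \<le> (\<integral>\<^sup>+ g. \<integral>\<^sup>+ y. ennreal (?p * neg_share q c j (W y)) \<partial>K j g \<partial>distr M borel (Gstat X j))"
      by (intro nn_integral_mono nn_integral_evalue_gw_le[OF W_meas c K_kernel])
    also have "\<dots> = (\<integral>\<^sup>+ y. ennreal (?p * neg_share q c j (W y)) \<partial>M)"
      by (rule disint[where F="\<lambda>z. ennreal (?p * neg_share q c j (W (snd z)))", simplified, symmetric])
         measurable
    finally show ?thesis .
  qed
  have "(\<Sum>j\<in>H. \<integral>\<^sup>+ y. ennreal (evalue X K W q c j y) \<partial>M)
      \<le> (\<Sum>j\<in>H. \<integral>\<^sup>+ y. ennreal (?p * neg_share q c j (W y)) \<partial>M)"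
    by (intro sum_mono null_j)
  also have "\<dots> = (\<integral>\<^sup>+ y. ennreal (?p * (\<Sum>j\<in>H. neg_share q c j (W y))) \<partial>M)"
    by (subst nn_integral_sum[symmetric])
       (auto intro!: nn_integral_cong simp: meas_M sum_ennreal neg_share_nonneg sum_distrib_left)
  also have "\<dots> \<le> (\<integral>\<^sup>+ y. ennreal ?p \<partial>M)"
    by (intro nn_integral_mono ennreal_leI mult_left_le sum_neg_share_le_1) simp
  also have "\<dots> = ennreal ?p"
    using prob_space.emeasure_space_1[OF M(1)] by simp
  finally show ?thesis .
qed

section \<open>The Gaussian model\<close>

lemma powr_minus_half_real: assumes "0 < (x::real)" shows "x powr (- real n / 2) = (1 / sqrt x) ^ n"
proof -
  have "x powr (- real n / 2) = (x powr (- 1 / 2)) powr real n"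
    by (simp add: powr_powr)
  also have "\<dots> = (1 / sqrt x) ^ n"
    using assms by (simp add: powr_realpow powr_minus_divide powr_half_sqrt)
  finally show ?thesis .
qed

lemma iso_gauss_density_eq_prod:
  fixes mu y :: "real^'n"
  assumes "0 < s"
  shows "(2 * pi * s^2) powr (- real CARD('n) / 2) * exp (- ((dist y mu) ^ 2) / (2 * s ^ 2))
       = (\<Prod>b\<in>Basis. normal_density (mu \<bullet> b) s (y \<bullet> b))"
proof -
  have "(dist y mu) ^ 2 = (\<Sum>b\<in>Basis. (y \<bullet> b - mu \<bullet> b)^2)"
    unfolding euclidean_dist_l2[of y] L2_set_def by (simp add: sum_nonneg dist_real_def)
  then have exp_eq: "exp (- ((dist y mu) ^ 2) / (2 * s ^ 2)) = (\<Prod>b\<in>Basis. exp (- ((y \<bullet> b - mu \<bullet> b) ^ 2) / (2 * s ^ 2)))"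
    by (simp add: exp_sum[symmetric] sum_negf[symmetric] sum_divide_distrib)
  have const_eq: "(2 * pi * s^2) powr (- real CARD('n) / 2) = (\<Prod>b\<in>(Basis :: (real^'n) set). 1 / sqrt (2 * pi * s^2))"
    using assms powr_minus_half_real[of "2 * pi * s^2" "CARD('n)"] by simp
  show ?thesis
    unfolding normal_density_def prod.distrib exp_eq const_eq ..
qed

lemma prob_space_iso_gauss: assumes "0 < s" shows "prob_space (iso_gauss (mu :: real^'n) s)"
proof
  have "emeasure (iso_gauss mu s) (space (iso_gauss mu s))
      = (\<integral>\<^sup>+ y. (\<Prod>b\<in>Basis. ennreal (normal_density (mu \<bullet> b) s (y \<bullet> b))) \<partial>lborel)"
    unfolding iso_gauss_def iso_gauss_density_eq_prod[OF assms]
    by (simp add: emeasure_density prod_ennreal)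
  also have "\<dots> = (\<Prod>b\<in>(Basis :: (real^'n) set). \<integral>\<^sup>+ x. ennreal (normal_density (mu \<bullet> b) s x) \<partial>lborel)"
    by (rule nn_integral_lborel_prod) auto
  also have "\<dots> = 1"
    using prob_space.emeasure_space_1[OF prob_space_normal_density[OF assms]]
    by (simp add: emeasure_density)
  finally show "emeasure (iso_gauss mu s) (space (iso_gauss mu s)) = 1" .
qed

section \<open>The eBH procedure\<close>

lemma ex_sorted_enumeration:
  fixes e :: "'p::finite \<Rightarrow> real"
  shows "\<exists>pi. bij_betw pi {1..CARD('p)} (UNIV::'p set) \<and>
      (\<forall>i\<in>{1..CARD('p)}. \<forall>k\<in>{1..CARD('p)}. i \<le> k \<longrightarrow> e (pi k) \<le> e (pi i))"
proof -
  obtain ys where "distinct ys" "set ys = (UNIV :: 'p set)"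
    using finite_distinct_list[of "UNIV :: 'p set"] by auto
  define xs where "xs = sort_key (\<lambda>x. - e x) ys"
  have xs: "distinct xs" "set xs = UNIV" "sorted (map (\<lambda>x. - e x) xs)"
    unfolding xs_def using \<open>distinct ys\<close> \<open>set ys = UNIV\<close> by auto
  then have len: "length xs = CARD('p)"
    by (metis distinct_card)
  define pi where "pi k = xs ! (k - 1)" for k
  have "bij_betw ((!) xs) {..<CARD('p)} UNIV"
    using bij_betw_nth[OF xs(1) _ xs(2)[symmetric]] len by simp
  moreover have "bij_betw (\<lambda>k. k - 1) {1..CARD('p)} {..<CARD('p)}"
    by (rule bij_betwI[where g=Suc]) auto
  ultimately have "bij_betw pi {1..CARD('p)} UNIV"
    unfolding pi_def using bij_betw_trans by (fastforce simp: comp_def)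
  moreover have "e (pi k) \<le> e (pi i)" if "i \<in> {1..CARD('p)}" "k \<in> {1..CARD('p)}" "i \<le> k" for i k
    using sorted_nth_mono[OF xs(3), of "i - 1" "k - 1"] that len unfolding pi_def by auto
  ultimately show ?thesis by blast
qed

lemma bij_betw_sort_desc: "bij_betw (sort_desc e) {1..CARD('p)} (UNIV::'p::finite set)"
  and sort_desc_antimono: "i \<in> {1..CARD('p)} \<Longrightarrow> k \<in> {1..CARD('p)} \<Longrightarrow> i \<le> k \<Longrightarrow> e (sort_desc e k) \<le> e (sort_desc e i)"
  using someI_ex[OF ex_sorted_enumeration[of e]] unfolding sort_desc_def[symmetric] by blast+

lemma ebh_khat_le_card: "ebh_khat a (e :: 'p::finite \<Rightarrow> real) \<le> CARD('p)"
  unfolding ebh_khat_def by (rule Max.boundedI) auto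

lemma card_ebh: "card (ebh a e) = ebh_khat a (e :: 'p::finite \<Rightarrow> real)"
proof -
  have "inj_on (sort_desc e) {1..ebh_khat a e}"
    using ebh_khat_le_card[of a e] bij_betw_sort_desc[of e]
    by (auto simp: bij_betw_def intro: inj_on_subset)
  then show ?thesis
    unfolding ebh_def by (simp add: card_image)
qed

lemma fdp_ebh_le:
  fixes e :: "'p::finite \<Rightarrow> real"
  assumes a: "0 < a" and e: "\<And>j. 0 \<le> e j"
  shows "fdp H (ebh a e) \<le> a / real CARD('p) * (\<Sum>j\<in>H. e j)"
proof -
  let ?n = "CARD('p)" and ?pi = "sort_desc e" and ?k = "ebh_khat a e"
  have rhs_nonneg: "0 \<le> a / real ?n * (\<Sum>j\<in>H. e j)"
    using a e by (intro mult_nonneg_nonneg sum_nonneg) auto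
  have "?k \<in> {0} \<union> {k \<in> {1..?n}. real k * e (?pi k) / real ?n \<ge> 1 / a}"
    unfolding ebh_khat_def by (rule Max_in) auto
  then consider "?k = 0" | "1 \<le> ?k" "real ?k * e (?pi ?k) / real ?n \<ge> 1 / a"
    by auto
  then show ?thesis
  proof cases
    case 1
    then show ?thesis using rhs_nonneg by (simp add: ebh_def fdp_def)
  next
    case 2
    \<comment> \<open>every rejected e-value is at least the \<open>?k\<close>-th largest, which is \<open>\<ge> p / (a ?k)\<close>\<close>
    have rejected: "1 / real ?k \<le> a / real ?n * e j" if j: "j \<in> ebh a e" for j
    proof -
      obtain i where i: "i \<in> {1..?k}" "j = ?pi i" using j unfolding ebh_def by blast
      then have "e (?pi ?k) \<le> e j"
        using ebh_khat_le_card[of a e] by (auto intro: sort_desc_antimono)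
      have "1 \<le> a * (real ?k * e (?pi ?k) / real ?n)"
        using 2 a by (simp add: field_simps)
      also have "\<dots> \<le> a * (real ?k * e j / real ?n)"
        using \<open>e (?pi ?k) \<le> e j\<close> a by (intro mult_left_mono divide_right_mono) auto
      finally show ?thesis using 2 by (simp add: field_simps)
    qed
    have "fdp H (ebh a e) = (\<Sum>j\<in>ebh a e \<inter> H. 1 / real ?k)"
      unfolding fdp_def card_ebh using 2 by simp
    also have "\<dots> \<le> (\<Sum>j\<in>ebh a e \<inter> H. a / real ?n * e j)"
      using rejected by (intro sum_mono) auto
    also have "\<dots> \<le> (\<Sum>j\<in>H. a / real ?n * e j)"
      using a e by (intro sum_mono2) auto
    finally show ?thesis by (simp add: sum_distrib_left)
  qed
qed

lemma nn_integral_fdp_ebh_le: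
  fixes e :: "'p::finite \<Rightarrow> 'a \<Rightarrow> real"
  assumes a: "0 < a"
    and e_meas: "\<And>j. e j \<in> borel_measurable M" and e_nonneg: "\<And>j y. 0 \<le> e j y"
    and e_sum: "(\<Sum>j\<in>H. \<integral>\<^sup>+ y. ennreal (e j y) \<partial>M) \<le> ennreal (real CARD('p))"
  shows "(\<integral>\<^sup>+ y. ennreal (fdp H (ebh a (\<lambda>j. e j y))) \<partial>M) \<le> ennreal a"
proof -
  let ?p = "real CARD('p)"
  have "(\<integral>\<^sup>+ y. ennreal (fdp H (ebh a (\<lambda>j. e j y))) \<partial>M)
      \<le> (\<integral>\<^sup>+ y. ennreal (a / ?p) * (\<Sum>j\<in>H. ennreal (e j y)) \<partial>M)"
  proof (intro nn_integral_mono)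
    fix y
    have "ennreal (fdp H (ebh a (\<lambda>j. e j y))) \<le> ennreal (a / ?p * (\<Sum>j\<in>H. e j y))"
      using a e_nonneg by (intro ennreal_leI fdp_ebh_le)
    also have "\<dots> = ennreal (a / ?p) * (\<Sum>j\<in>H. ennreal (e j y))"
      using a e_nonneg by (simp add: ennreal_mult[symmetric] sum_nonneg)
    finally show "ennreal (fdp H (ebh a (\<lambda>j. e j y))) \<le> ennreal (a / ?p) * (\<Sum>j\<in>H. ennreal (e j y))" .
  qed
  also have "\<dots> = ennreal (a / ?p) * (\<Sum>j\<in>H. \<integral>\<^sup>+ y. ennreal (e j y) \<partial>M)"
    using e_meas by (simp add: nn_integral_cmult nn_integral_sum)
  also have "\<dots> \<le> ennreal (a / ?p) * ennreal ?p"
    by (intro mult_left_mono e_sum) simp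
  also have "\<dots> = ennreal a"
    using a by (simp flip: ennreal_mult)
  finally show ?thesis .
qed

text \<open>Full rank of \<open>X\<close> is what makes the null law of \<open>y\<close> given \<open>G\<^sub>j\<close> free of the
  nuisance parameters; here that law is supplied as the kernel \<open>K\<close>.\<close>

theorem proposition2p3:
  fixes X :: "real^'p^'n" and b :: "real^'p" and s q c :: real
    and W :: "real^'n \<Rightarrow> real^'p"
    and K :: "'p \<Rightarrow> (real^'p) \<times> real \<Rightarrow> (real^'n) measure"
  assumes full_rank: "rank X = CARD('p)"
    and s_pos: "s > 0"
    and W_meas: "W \<in> borel_measurable borel"
    and q: "0 < q" "q < 1"
    and c: "c \<ge> 0"
    and K_kernel: "\<And>j. K j \<in> borel \<rightarrow>\<^sub>M prob_algebra borel"
    and K_cond: "\<And>j b' s'. b' $ j = 0 \<Longrightarrow> s' > 0 \<Longrightarrow>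
        distr (iso_gauss (X *v b') s') borel (\<lambda>y. (Gstat X j y, y))
      = distr (iso_gauss (X *v b') s') borel (Gstat X j)
          \<bind> (\<lambda>g. distr (K j g) borel (\<lambda>y. (g, y)))"
  shows "((\<Sum>j\<in>{j. b $ j = 0}. \<integral>\<^sup>+ y. ennreal (evalue X K W q c j y) \<partial>(iso_gauss (X *v b) s))
           \<le> ennreal (real CARD('p)))
     \<and> (\<forall>a. 0 < a \<and> a < 1 \<longrightarrow>
           (\<integral>\<^sup>+ y. ennreal (fdp {j. b $ j = 0} (ebh a (\<lambda>j. evalue X K W q c j y)))
              \<partial>(iso_gauss (X *v b) s)) \<le> ennreal a)"
proof -
  let ?M = "iso_gauss (X *v b) s"
  have sets_M: "sets ?M = sets borel"
    unfolding iso_gauss_def by simp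
  have e_sum: "(\<Sum>j\<in>{j. b $ j = 0}. \<integral>\<^sup>+ y. ennreal (evalue X K W q c j y) \<partial>?M) \<le> ennreal (real CARD('p))"
    using K_cond s_pos
    by (intro sum_nn_integral_evalue_le[OF prob_space_iso_gauss[OF s_pos] sets_M W_meas c K_kernel]) auto
  have "evalue X K W q c j \<in> borel_measurable ?M" for j
    using borel_measurable_evalue[of W c K, OF W_meas c K_kernel] measurable_cong_sets[OF sets_M refl] by blast
  moreover have "0 \<le> evalue X K W q c j y" for j y
    unfolding evalue_eq_evalue_gw using c by (rule evalue_gw_nonneg)
  ultimately show ?thesis
    using e_sum nn_integral_fdp_ebh_le[of _ "\<lambda>j y. evalue X K W q c j y"] by blast
qed

end
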